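(* Let $T$ be a tree. Then $T$ has a complete $\alpha$-labeling if and only if there is a bipartition of $T$ and an arrangement of the vertices of $T$ such that the corresponding biadjacency matrix of $T$ is completely graceful.
   Context: For a graph $G=(V,E)$ with $m$ edges, an $\alpha$-labeling with critical number $k$ is an injective $f:V\to\{0,\ldots,m\}$ whose edge labels $|f(u)-f(v)|$ ($uv\in E$) are distinct and such that every edge $uv$ satisfies $f(u)\le k<f(v)$ or $f(v)\le k<f(u)$; it is complete if $f$ is bijective. For a bipartite graph with ordered parts $X,Y$, the biadjacency matrix is the $|X|\times|Y|$ $0$-$1$ matrix whose $(x,y)$ entry is $1$ iff $xy$ is an edge. For a $p\times q$ matrix the box-value of position $(i,j)$ is $p+j-i$; for $c=1,\ldots,p+q-1$ the positions of box-value $c$ form a diagonal. A $0$-$1$ matrix is completely graceful if every diagonal contains exactly one $1$. *)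

theory Defs
  imports Main
begin

definition simple_graph :: "'a set \<Rightarrow> 'a set set \<Rightarrow> bool" where
  "simple_graph V E \<longleftrightarrow> finite V \<and>
     (\<forall>e\<in>E. \<exists>u v. e = {u, v} \<and> u \<noteq> v \<and> u \<in> V \<and> v \<in> V)"

definition connected_graph :: "'a set \<Rightarrow> 'a set set \<Rightarrow> bool" where
  "connected_graph V E \<longleftrightarrow> V \<noteq> {} \<and>
     (\<forall>u\<in>V. \<forall>v\<in>V. (\<lambda>x y. {x, y} \<in> E)\<^sup>*\<^sup>* u v)"

definition is_cycle :: "'a set set \<Rightarrow> 'a list \<Rightarrow> bool" where
  "is_cycle E cs \<longleftrightarrow> length cs \<ge> 3 \<and> distinct cs \<and>
     (\<forall>i. Suc i < length cs \<longrightarrow> {cs ! i, cs ! Suc i} \<in> E) \<and>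
     {last cs, hd cs} \<in> E"

definition is_tree :: "'a set \<Rightarrow> 'a set set \<Rightarrow> bool" where
  "is_tree V E \<longleftrightarrow> simple_graph V E \<and> connected_graph V E \<and> (\<nexists>cs. is_cycle E cs)"

definition complete_alpha_labeling :: "'a set \<Rightarrow> 'a set set \<Rightarrow> ('a \<Rightarrow> nat) \<Rightarrow> nat \<Rightarrow> bool" where
  "complete_alpha_labeling V E f k \<longleftrightarrow>
     bij_betw f V {0..card E} \<and>
     (\<forall>u v u' v'. {u, v} \<in> E \<longrightarrow> {u', v'} \<in> E \<longrightarrow>
        \<bar>int (f u) - int (f v)\<bar> = \<bar>int (f u') - int (f v')\<bar> \<longrightarrow> {u, v} = {u', v'}) \<and>
     (\<forall>u v. {u, v} \<in> E \<longrightarrow> (f u \<le> k \<and> k < f v) \<or> (f v \<le> k \<and> k < f u))"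

definition has_complete_alpha_labeling :: "'a set \<Rightarrow> 'a set set \<Rightarrow> bool" where
  "has_complete_alpha_labeling V E \<longleftrightarrow> (\<exists>f k. complete_alpha_labeling V E f k)"

definition is_bipartition :: "'a set \<Rightarrow> 'a set set \<Rightarrow> 'a set \<Rightarrow> 'a set \<Rightarrow> bool" where
  "is_bipartition V E X Y \<longleftrightarrow> X \<union> Y = V \<and> X \<inter> Y = {} \<and>
     (\<forall>u v. {u, v} \<in> E \<longrightarrow> (u \<in> X \<and> v \<in> Y) \<or> (u \<in> Y \<and> v \<in> X))"

definition biadj_matrix :: "'a set set \<Rightarrow> (nat \<Rightarrow> 'a) \<Rightarrow> (nat \<Rightarrow> 'a) \<Rightarrow> nat \<Rightarrow> nat \<Rightarrow> nat" where
  "biadj_matrix E xs ys = (\<lambda>i j. if {xs i, ys j} \<in> E then 1 else 0)"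

text \<open>A p x q 0-1 matrix (rows 1..p, columns 1..q) is completely graceful if each
  diagonal of box-value c = p + j - i, c = 1..p+q-1, contains exactly one 1.\<close>

definition completely_graceful :: "nat \<Rightarrow> nat \<Rightarrow> (nat \<Rightarrow> nat \<Rightarrow> nat) \<Rightarrow> bool" where
  "completely_graceful p q M \<longleftrightarrow>
     (\<forall>i\<in>{1..p}. \<forall>j\<in>{1..q}. M i j \<in> {0, 1}) \<and>
     (\<forall>c\<in>{1..p + q - 1}. \<exists>!ij. fst ij \<in> {1..p} \<and> snd ij \<in> {1..q} \<and>
         p + snd ij - fst ij = c \<and> M (fst ij) (snd ij) = 1)"

end

theory Submission
  imports Defs
begin

text \<open>Given a bipartition \<open>(X, Y)\<close> with arrangements \<open>xs\<close>, \<open>ys\<close>, label the \<open>i\<close>-th vertex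
  of \<open>X\<close> by \<open>i - 1\<close> and the \<open>j\<close>-th vertex of \<open>Y\<close> by \<open>|X| + j - 1\<close>. The edge in position
  \<open>(i, j)\<close> of the biadjacency matrix then gets the label \<open>|X| + j - i\<close>, its box value. Hence
  the matrix is completely graceful exactly when the edge labels form a bijection onto
  \<open>{1..|V| - 1}\<close>, i.e. when this labelling is a complete \<open>\<alpha>\<close>-labeling with critical number
  \<open>|X| - 1\<close>. Conversely, a complete \<open>\<alpha>\<close>-labeling with critical number \<open>k\<close> arises in this way
  from the vertices labelled at most \<open>k\<close> and the remaining ones, each arranged by increasing
  label.\<close>

lemma bij_betw_iff_ex1:
  assumes "f ` A \<subseteq> B"
  shows "bij_betw f A B \<longleftrightarrow> (\<forall>b\<in>B. \<exists>!a. a \<in> A \<and> f a = b)"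
  using assms unfolding bij_betw_def inj_on_def by blast

lemma bij_betw_shift_interval: "bij_betw (\<lambda>i. a + i - 1) {1..n} {a..<a + n :: nat}"
  by (rule bij_betw_byWitness[where f' = "\<lambda>k. k + 1 - a"]) auto

lemma bij_betw_the_inv_into_comp:
  assumes f: "bij_betw f V C" and h: "bij_betw h A B" and "B \<subseteq> C"
  shows "bij_betw (the_inv_into V f \<circ> h) A {v \<in> V. f v \<in> B}"
proof -
  have "the_inv_into V f ` B = {v \<in> V. f v \<in> B}"
  proof
    show "the_inv_into V f ` B \<subseteq> {v \<in> V. f v \<in> B}"
      using f \<open>B \<subseteq> C\<close> bij_betw_apply[OF bij_betw_the_inv_into[OF f]]
      by (auto simp: f_the_inv_into_f_bij_betw)
    show "{v \<in> V. f v \<in> B} \<subseteq> the_inv_into V f ` B"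
      using f by (force simp: bij_betw_def the_inv_into_f_f)
  qed
  then have "bij_betw (the_inv_into V f) B {v \<in> V. f v \<in> B}"
    by (rule bij_betw_subset[OF bij_betw_the_inv_into[OF f] \<open>B \<subseteq> C\<close>])
  then show ?thesis
    using h by (rule bij_betw_trans[rotated])
qed

lemma simple_graph_edgeE:
  assumes "simple_graph V E" and "e \<in> E"
  obtains u v where "e = {u, v}" and "u \<noteq> v" and "u \<in> V" and "v \<in> V"
  using assms unfolding simple_graph_def by blast

lemma simple_graph_edge_mem:
  assumes "simple_graph V E" and "{u, v} \<in> E"
  shows "u \<in> V" and "v \<in> V"
  using simple_graph_edgeE[OF assms] by (metis doubleton_eq_iff)+

lemma bipartition_edgeE:
  assumes "simple_graph V E" and "is_bipartition V E X Y" and "e \<in> E"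
  obtains x y where "e = {x, y}" and "x \<in> X" and "y \<in> Y"
proof -
  obtain u v where "e = {u, v}" using simple_graph_edgeE[OF assms(1,3)] by blast
  with assms(2,3) that show thesis
    unfolding is_bipartition_def by (metis insert_commute)
qed

definition edge_label :: "('a \<Rightarrow> nat) \<Rightarrow> 'a set \<Rightarrow> nat" where
  "edge_label f e = Max (f ` e) - Min (f ` e)"

lemma int_edge_label_doubleton: "int (edge_label f {u, v}) = \<bar>int (f u) - int (f v)\<bar>"
  by (cases "f u \<le> f v") (auto simp: edge_label_def max_def min_def)

lemma inj_on_edge_label_iff:
  assumes "simple_graph V E"
  shows "inj_on (edge_label f) E \<longleftrightarrow>
    (\<forall>u v u' v'. {u, v} \<in> E \<longrightarrow> {u', v'} \<in> E \<longrightarrow>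
        \<bar>int (f u) - int (f v)\<bar> = \<bar>int (f u') - int (f v')\<bar> \<longrightarrow> {u, v} = {u', v'})"
    (is "_ \<longleftrightarrow> ?distinct")
proof
  assume "inj_on (edge_label f) E"
  then show ?distinct by (metis inj_onD int_edge_label_doubleton of_nat_eq_iff)
next
  assume ?distinct
  show "inj_on (edge_label f) E"
  proof (rule inj_onI)
    fix e e' assume "e \<in> E" "e' \<in> E" "edge_label f e = edge_label f e'"
    with \<open>?distinct\<close> show "e = e'"
      by (metis assms simple_graph_edgeE int_edge_label_doubleton)
  qed
qed

lemma bij_betw_edge_label_if_inj:
  assumes sg: "simple_graph V E" and f: "bij_betw f V {0..card E}"
    and inj: "inj_on (edge_label f) E"
  shows "bij_betw (edge_label f) E {1..card E}"
proof -
  have "edge_label f e \<in> {1..card E}" if e: "e \<in> E" for e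
  proof -
    obtain u v where uv: "e = {u, v}" "u \<noteq> v" "u \<in> V" "v \<in> V"
      using simple_graph_edgeE[OF sg e] by blast
    have "f u \<noteq> f v" and "f u \<le> card E" and "f v \<le> card E"
      using uv bij_betw_apply[OF f] inj_on_eq_iff[OF bij_betw_imp_inj_on[OF f]] by auto
    then have "int (edge_label f e) \<in> {1..int (card E)}"
      using int_edge_label_doubleton[of f u v] uv(1) by auto
    then show ?thesis by auto
  qed
  then have "edge_label f ` E \<subseteq> {1..card E}" by blast
  moreover have "card (edge_label f ` E) = card {1..card E}"
    using card_image[OF inj] by simp
  ultimately show ?thesis
    using inj by (simp add: bij_betw_def card_subset_eq)
qed

definition box_value :: "nat \<Rightarrow> nat \<times> nat \<Rightarrow> nat" where
  "box_value p ij = p + snd ij - fst ij"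

definition matrix_ones :: "nat \<Rightarrow> nat \<Rightarrow> (nat \<Rightarrow> nat \<Rightarrow> nat) \<Rightarrow> (nat \<times> nat) set" where
  "matrix_ones p q M = {ij. fst ij \<in> {1..p} \<and> snd ij \<in> {1..q} \<and> M (fst ij) (snd ij) = 1}"

lemma box_value_in_range:
  assumes "fst ij \<in> {1..p}" and "snd ij \<in> {1..q}"
  shows "box_value p ij \<in> {1..p + q - 1}"
  using assms by (auto simp: box_value_def)

lemma completely_graceful_iff_bij_box_value:
  "completely_graceful p q M \<longleftrightarrow>
     (\<forall>i\<in>{1..p}. \<forall>j\<in>{1..q}. M i j \<in> {0, 1}) \<and>
     bij_betw (box_value p) (matrix_ones p q M) {1..p + q - 1}"
proof -
  have "box_value p ` matrix_ones p q M \<subseteq> {1..p + q - 1}"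
    using box_value_in_range by (auto simp: matrix_ones_def)
  then have "bij_betw (box_value p) (matrix_ones p q M) {1..p + q - 1} \<longleftrightarrow>
      (\<forall>c\<in>{1..p + q - 1}. \<exists>!ij. ij \<in> matrix_ones p q M \<and> box_value p ij = c)"
    by (rule bij_betw_iff_ex1)
  then show ?thesis
    unfolding completely_graceful_def matrix_ones_def box_value_def
    by (simp add: conj_commute conj_left_commute)
qed

lemma bij_betw_matrix_ones_biadj_edges:
  assumes sg: "simple_graph V E" and bip: "is_bipartition V E X Y"
    and xs: "bij_betw xs {1..p} X" and ys: "bij_betw ys {1..q} Y"
  shows "bij_betw (\<lambda>ij. {xs (fst ij), ys (snd ij)}) (matrix_ones p q (biadj_matrix E xs ys)) E"
proof (rule bij_betw_imageI)
  have disj: "X \<inter> Y = {}" using bip unfolding is_bipartition_def by blast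
  show "inj_on (\<lambda>ij. {xs (fst ij), ys (snd ij)}) (matrix_ones p q (biadj_matrix E xs ys))"
  proof (rule inj_onI)
    fix a b
    assume a: "a \<in> matrix_ones p q (biadj_matrix E xs ys)"
      and b: "b \<in> matrix_ones p q (biadj_matrix E xs ys)"
      and eq: "{xs (fst a), ys (snd a)} = {xs (fst b), ys (snd b)}"
    have "xs (fst a) \<in> X" "ys (snd b) \<in> Y"
      using a b bij_betw_apply[OF xs] bij_betw_apply[OF ys] by (auto simp: matrix_ones_def)
    then have "xs (fst a) = xs (fst b)" and "ys (snd a) = ys (snd b)"
      using eq disj by (auto simp: doubleton_eq_iff)
    moreover have "inj_on xs {1..p}" "inj_on ys {1..q}"
      using xs ys by (auto simp: bij_betw_def)
    ultimately show "a = b"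
      using a b by (simp add: matrix_ones_def inj_on_eq_iff prod_eq_iff)
  qed
  show "(\<lambda>ij. {xs (fst ij), ys (snd ij)}) ` matrix_ones p q (biadj_matrix E xs ys) = E"
  proof
    show "(\<lambda>ij. {xs (fst ij), ys (snd ij)}) ` matrix_ones p q (biadj_matrix E xs ys) \<subseteq> E"
      by (auto simp: matrix_ones_def biadj_matrix_def split: if_splits)
    show "E \<subseteq> (\<lambda>ij. {xs (fst ij), ys (snd ij)}) ` matrix_ones p q (biadj_matrix E xs ys)"
    proof
      fix e assume e: "e \<in> E"
      then obtain x y where xy: "e = {x, y}" "x \<in> X" "y \<in> Y"
        using bipartition_edgeE[OF sg bip] by blast
      obtain i j where "i \<in> {1..p}" "xs i = x" "j \<in> {1..q}" "ys j = y"
        using xy xs ys unfolding bij_betw_def by blast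
      with e xy have "(i, j) \<in> matrix_ones p q (biadj_matrix E xs ys)"
        by (simp add: matrix_ones_def biadj_matrix_def)
      with xy \<open>xs i = x\<close> \<open>ys j = y\<close>
      show "e \<in> (\<lambda>ij. {xs (fst ij), ys (snd ij)}) ` matrix_ones p q (biadj_matrix E xs ys)"
        by force
    qed
  qed
qed

definition arrangement_labeling ::
    "nat \<Rightarrow> nat \<Rightarrow> (nat \<Rightarrow> 'a) \<Rightarrow> (nat \<Rightarrow> 'a) \<Rightarrow> ('a \<Rightarrow> nat) \<Rightarrow> bool" where
  "arrangement_labeling p q xs ys f \<longleftrightarrow>
     (\<forall>i\<in>{1..p}. f (xs i) = i - 1) \<and> (\<forall>j\<in>{1..q}. f (ys j) = p + j - 1)"

lemma arrangement_labeling_exists: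
  assumes xs: "bij_betw xs {1..p} X" and ys: "bij_betw ys {1..q} Y" and disj: "X \<inter> Y = {}"
  shows "\<exists>f. arrangement_labeling p q xs ys f"
proof
  let ?f = "\<lambda>v. if v \<in> X then the_inv_into {1..p} xs v - 1 else p + the_inv_into {1..q} ys v - 1"
  have "?f (xs i) = i - 1" if "i \<in> {1..p}" for i
    using that xs by (simp add: bij_betw_apply bij_betw_imp_inj_on the_inv_into_f_f)
  moreover have "?f (ys j) = p + j - 1" if "j \<in> {1..q}" for j
    using that ys disj by (auto simp: bij_betw_apply bij_betw_imp_inj_on the_inv_into_f_f)
  ultimately show "arrangement_labeling p q xs ys ?f"
    unfolding arrangement_labeling_def by blast
qed

lemma bij_betw_arrangement_labeling:
  assumes xs: "bij_betw xs {1..p} X" and ys: "bij_betw ys {1..q} Y"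
    and f: "arrangement_labeling p q xs ys f"
  shows "bij_betw f X {0..<p}" and "bij_betw f Y {p..<p + q}"
proof -
  have "bij_betw (f \<circ> xs) {1..p} {0..<p}"
    using bij_betw_shift_interval[of 0 p] f
    by (subst bij_betw_cong[of _ _ "\<lambda>i. 0 + i - 1"]) (simp_all add: arrangement_labeling_def)
  then show "bij_betw f X {0..<p}"
    using bij_betw_comp_iff[OF xs] by blast
  have "bij_betw (f \<circ> ys) {1..q} {p..<p + q}"
    using bij_betw_shift_interval[of p q] f
    by (subst bij_betw_cong[of _ _ "\<lambda>j. p + j - 1"]) (simp_all add: arrangement_labeling_def)
  then show "bij_betw f Y {p..<p + q}"
    using bij_betw_comp_iff[OF ys] by blast
qed

lemma edge_label_arrangement:
  assumes "arrangement_labeling p q xs ys f" and "i \<in> {1..p}" and "j \<in> {1..q}"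
  shows "edge_label f {xs i, ys j} = box_value p (i, j)"
proof -
  have "int (edge_label f {xs i, ys j}) = int (box_value p (i, j))"
    using assms unfolding arrangement_labeling_def int_edge_label_doubleton box_value_def by auto
  then show ?thesis by simp
qed

lemma completely_graceful_iff_bij_edge_label:
  assumes sg: "simple_graph V E" and bip: "is_bipartition V E X Y"
    and xs: "bij_betw xs {1..p} X" and ys: "bij_betw ys {1..q} Y"
    and f: "arrangement_labeling p q xs ys f"
  shows "completely_graceful p q (biadj_matrix E xs ys) \<longleftrightarrow>
    bij_betw (edge_label f) E {1..p + q - 1}"
proof -
  let ?ones = "matrix_ones p q (biadj_matrix E xs ys)"
  have "bij_betw (edge_label f) E {1..p + q - 1} \<longleftrightarrow>
      bij_betw (edge_label f \<circ> (\<lambda>ij. {xs (fst ij), ys (snd ij)})) ?ones {1..p + q - 1}"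
    by (rule bij_betw_comp_iff[OF bij_betw_matrix_ones_biadj_edges[OF sg bip xs ys]])
  also have "\<dots> \<longleftrightarrow> bij_betw (box_value p) ?ones {1..p + q - 1}"
  proof (rule bij_betw_cong)
    fix ij assume "ij \<in> ?ones"
    then show "(edge_label f \<circ> (\<lambda>ij. {xs (fst ij), ys (snd ij)})) ij = box_value p ij"
      by (cases ij) (simp add: matrix_ones_def edge_label_arrangement[OF f])
  qed
  also have "\<dots> \<longleftrightarrow> completely_graceful p q (biadj_matrix E xs ys)"
    by (simp add: completely_graceful_iff_bij_box_value biadj_matrix_def)
  finally show ?thesis by simp
qed

lemma has_complete_alpha_labeling_if_completely_graceful:
  assumes sg: "simple_graph V E" and "V \<noteq> {}" and bip: "is_bipartition V E X Y"
    and xs: "bij_betw xs {1..card X} X" and ys: "bij_betw ys {1..card Y} Y"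
    and cg: "completely_graceful (card X) (card Y) (biadj_matrix E xs ys)"
  shows "has_complete_alpha_labeling V E"
proof -
  define p q where "p = card X" and "q = card Y"
  have V: "V = X \<union> Y" and disj: "X \<inter> Y = {}"
    using bip unfolding is_bipartition_def by auto
  obtain f where f: "arrangement_labeling p q xs ys f"
    using arrangement_labeling_exists[OF xs ys disj] unfolding p_def q_def by blast
  have fX: "bij_betw f X {0..<p}" and fY: "bij_betw f Y {p..<p + q}"
    using bij_betw_arrangement_labeling[OF xs ys f[unfolded p_def q_def]]
    unfolding p_def q_def by blast+
  have "bij_betw f V ({0..<p} \<union> {p..<p + q})"
    unfolding V by (rule bij_betw_combine[OF fX fY]) auto
  then have fV: "bij_betw f V {0..<p + q}"
    by (simp add: ivl_disj_un_two(3))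
  have "p + q \<noteq> 0"
    using bij_betw_same_card[OF fV] \<open>V \<noteq> {}\<close> sg by (auto simp: simple_graph_def)
  have labels: "bij_betw (edge_label f) E {1..p + q - 1}"
    using completely_graceful_iff_bij_edge_label[OF sg bip xs ys] f cg
    unfolding p_def q_def by blast
  then have "{0..<p + q} = {0..card E}"
    using \<open>p + q \<noteq> 0\<close> by (auto simp: bij_betw_same_card)
  with fV have "bij_betw f V {0..card E}" by simp
  moreover have "(f u \<le> p - 1 \<and> p - 1 < f v) \<or> (f v \<le> p - 1 \<and> p - 1 < f u)"
    if "{u, v} \<in> E" for u v
  proof -
    have "(u \<in> X \<and> v \<in> Y) \<or> (u \<in> Y \<and> v \<in> X)"
      using bip that unfolding is_bipartition_def by blast
    then show ?thesis
      using bij_betw_apply[OF fX] bij_betw_apply[OF fY] by fastforce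
  qed
  moreover have "inj_on (edge_label f) E"
    using labels by (rule bij_betw_imp_inj_on)
  ultimately show ?thesis
    unfolding has_complete_alpha_labeling_def complete_alpha_labeling_def
      inj_on_edge_label_iff[OF sg, symmetric] by blast
qed

lemma completely_graceful_if_complete_alpha_labeling:
  assumes sg: "simple_graph V E" and alpha: "complete_alpha_labeling V E f k"
  shows "\<exists>X Y xs ys. is_bipartition V E X Y \<and>
    bij_betw xs {1..card X} X \<and> bij_betw ys {1..card Y} Y \<and>
    completely_graceful (card X) (card Y) (biadj_matrix E xs ys)"
proof -
  define m where "m = card E"
  have f: "bij_betw f V {0..m}" and inj: "inj_on (edge_label f) E"
    and cross: "\<And>u v. {u, v} \<in> E \<Longrightarrow> (f u \<le> k \<and> k < f v) \<or> (f v \<le> k \<and> k < f u)"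
    using alpha unfolding complete_alpha_labeling_def inj_on_edge_label_iff[OF sg] m_def
    by blast+
  define p where "p = min (Suc k) (Suc m)"
  define q where "q = Suc m - p"
  define g where "g = the_inv_into V f"
  define X where "X = {v \<in> V. f v \<in> {0..<p}}"
  define Y where "Y = {v \<in> V. f v \<in> {p..<p + q}}"
  define xs where "xs = g \<circ> (\<lambda>i. i - 1)"
  define ys where "ys = g \<circ> (\<lambda>j. p + j - 1)"
  have pq: "p + q = Suc m" and range: "{0..m} = {0..<p + q}"
    unfolding p_def q_def by auto
  have xs: "bij_betw xs {1..p} X"
    using bij_betw_the_inv_into_comp[OF f[unfolded range] bij_betw_shift_interval[of 0 p]]
    unfolding xs_def X_def g_def by simp
  have ys: "bij_betw ys {1..q} Y"
    using bij_betw_the_inv_into_comp[OF f[unfolded range] bij_betw_shift_interval[of p q]]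
    unfolding ys_def Y_def g_def by simp
  have "f (g b) = b" if "b < p + q" for b
    unfolding g_def using that by (intro f_the_inv_into_f_bij_betw[OF f]) (simp add: range)
  then have "arrangement_labeling p q xs ys f"
    unfolding arrangement_labeling_def xs_def ys_def by auto
  moreover have bip: "is_bipartition V E X Y"
    unfolding is_bipartition_def
  proof (intro conjI allI impI)
    show "X \<union> Y = V" and "X \<inter> Y = {}"
      using bij_betw_apply[OF f[unfolded range]] unfolding X_def Y_def by auto
    fix u v assume "{u, v} \<in> E"
    then show "u \<in> X \<and> v \<in> Y \<or> u \<in> Y \<and> v \<in> X"
      using cross simple_graph_edge_mem[OF sg] bij_betw_apply[OF f] pq
      unfolding X_def Y_def p_def by fastforce
  qed
  moreover have "bij_betw (edge_label f) E {1..p + q - 1}"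
    using bij_betw_edge_label_if_inj[OF sg f[unfolded m_def] inj] pq unfolding m_def by simp
  ultimately have "completely_graceful p q (biadj_matrix E xs ys)"
    using completely_graceful_iff_bij_edge_label[OF sg _ xs ys] by blast
  moreover have "card X = p" and "card Y = q"
    using bij_betw_same_card[OF xs] bij_betw_same_card[OF ys] by simp_all
  ultimately show ?thesis
    using bip xs ys by metis
qed

theorem corollary2p7:
  fixes V :: "'a set" and E :: "'a set set"
  assumes "is_tree V E"
  shows "has_complete_alpha_labeling V E \<longleftrightarrow>
    (\<exists>X Y xs ys. is_bipartition V E X Y \<and>
        bij_betw xs {1..card X} X \<and> bij_betw ys {1..card Y} Y \<and>
        completely_graceful (card X) (card Y) (biadj_matrix E xs ys))"
proof -
  have sg: "simple_graph V E" and "V \<noteq> {}"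
    using assms unfolding is_tree_def connected_graph_def by auto
  show ?thesis
    using completely_graceful_if_complete_alpha_labeling[OF sg]
      has_complete_alpha_labeling_if_completely_graceful[OF sg \<open>V \<noteq> {}\<close>]
    unfolding has_complete_alpha_labeling_def by blast
qed

end
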